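(* Let $m$ be an odd positive integer. If $K^*_{2m}$ admits a $\vec{C}_m$-factorization, then $K^*_{6m}$ admits a $\vec{C}_{3m}$-factorization.
   Context: $K^*_n$ denotes the complete symmetric digraph on $n$ vertices (both arcs $(u,v),(v,u)$ for all distinct $u,v$; no loops). A $\vec{C}_\ell$-factor of a digraph is a spanning subdigraph that is a disjoint union of directed cycles of length $\ell$; a $\vec{C}_\ell$-factorization is a partition of the arc set into $\vec{C}_\ell$-factors. *)

theory Defs
  imports Main
begin

definition complete_sym_digraph :: "nat \<Rightarrow> (nat \<times> nat) set" where
  "complete_sym_digraph n = {(u, v). u < n \<and> v < n \<and> u \<noteq> v}"

definition dcycle_arcs :: "'a list \<Rightarrow> ('a \<times> 'a) set" where
  "dcycle_arcs vs = {(vs ! i, vs ! ((i + 1) mod length vs)) | i. i < length vs}"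

definition is_dcycle_factor :: "nat \<Rightarrow> 'a set \<Rightarrow> ('a \<times> 'a) set \<Rightarrow> ('a \<times> 'a) set \<Rightarrow> bool" where
  "is_dcycle_factor l V A F \<longleftrightarrow> F \<subseteq> A \<and>
     (\<exists>Cs. (\<forall>c\<in>Cs. distinct c \<and> length c = l) \<and>
           (\<forall>c\<in>Cs. \<forall>d\<in>Cs. c \<noteq> d \<longrightarrow> set c \<inter> set d = {}) \<and>
           \<Union>(set ` Cs) = V \<and>
           F = \<Union>(dcycle_arcs ` Cs))"

definition has_dcycle_factorization :: "nat \<Rightarrow> 'a set \<Rightarrow> ('a \<times> 'a) set \<Rightarrow> bool" where
  "has_dcycle_factorization l V A \<longleftrightarrow>
     (\<exists>\<F>. (\<forall>F\<in>\<F>. is_dcycle_factor l V A F) \<and>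
          (\<forall>F\<in>\<F>. \<forall>G\<in>\<F>. F \<noteq> G \<longrightarrow> F \<inter> G = {}) \<and>
          \<Union>\<F> = A)"

end

theory Submission
  imports Defs "HOL-Number_Theory.Cong"
begin

text \<open>Blow up every vertex \<open>y\<close> of \<open>K*\<^sub>2\<^sub>m\<close> into the three vertices \<open>3y, 3y+1, 3y+2\<close>.
  A directed \<open>m\<close>-cycle \<open>c\<close> together with a permutation \<open>\<sigma>\<close> of \<open>\<int>\<^sub>m \<times> \<int>\<^sub>3\<close>
  (position on \<open>c\<close>, copy) which is a single \<open>3m\<close>-cycle and sends every point to one of its five
  out-neighbours in the lexicographic product of the directed \<open>m\<close>-cycle with \<open>K*\<^sub>3\<close> lifts to a
  directed \<open>3m\<close>-cycle; lifting all cycles of a factor along the same \<open>\<sigma>\<close> gives a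
  \<open>C\<^sub>3\<^sub>m\<close>-factor of \<open>K*\<^sub>6\<^sub>m\<close>. Fix one factor \<open>F\<^sub>0\<close> of the given factorization. Every other
  factor is lifted along three templates that only move forward and together use each forward arc
  exactly once; \<open>F\<^sub>0\<close> is lifted along five templates that together use each of the five
  out-neighbours exactly once, which also covers the arcs inside the triples. For odd \<open>m\<close> these five
  templates are given by an explicit table. The resulting \<open>3(2m - 2) + 5 = 6m - 1\<close> factors partition
  the arcs of \<open>K*\<^sub>6\<^sub>m\<close>.\<close>

lemma add_mod_cancel_left:
  fixes a p q N :: nat
  shows "(a + p) mod N = (a + q) mod N \<longleftrightarrow> p mod N = q mod N"
  using cong_add_lcancel_nat[of a p q N] by (simp add: cong_def)

lemma add_mod_cancel_less:
  fixes a p q N :: nat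
  assumes "(a + p) mod N = (a + q) mod N" "p < N" "q < N"
  shows "p = q"
  using assms by (simp add: add_mod_cancel_left)

lemma bij_betw_apply_image:
  assumes "inj_on (\<lambda>i. f i x) I"
  shows "bij_betw (\<lambda>\<sigma>. \<sigma> x) (f ` I) ((\<lambda>i. f i x) ` I)"
  using assms by (auto simp: bij_betw_def inj_on_def image_image)

definition single_cycle_on :: "'a set \<Rightarrow> ('a \<Rightarrow> 'a) \<Rightarrow> bool" where
  "single_cycle_on W \<sigma> \<longleftrightarrow> (\<exists>L. distinct L \<and> set L = W \<and> dcycle_arcs L = (\<lambda>x. (x, \<sigma> x)) ` W)"

lemma single_cycle_onI:
  fixes \<sigma> :: "'a \<Rightarrow> 'a" and pos :: "'a \<Rightarrow> nat"
  assumes fin: "finite W" and z: "z \<in> W"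
    and closed: "\<And>x. x \<in> W \<Longrightarrow> \<sigma> x \<in> W"
    and pos_step: "\<And>x. x \<in> W \<Longrightarrow> pos (\<sigma> x) mod card W = (pos x + 1) mod card W"
  shows "single_cycle_on W \<sigma>"
proof -
  define N where "N = card W"
  have N0: "N > 0" using fin z by (auto simp: N_def card_gt_0_iff)
  define L where "L = map (\<lambda>p. (\<sigma>^^p) z) [0..<N]"
  have orbit_in: "(\<sigma>^^p) z \<in> W" for p by (induction p) (auto simp: z closed)
  have pos_orbit: "pos ((\<sigma>^^p) z) mod N = (pos z + p) mod N" for p
  proof (induction p)
    case (Suc p)
    have "pos ((\<sigma>^^Suc p) z) mod N = (pos ((\<sigma>^^p) z) mod N + 1) mod N"
      using pos_step[OF orbit_in[of p]] by (simp add: N_def mod_Suc_eq)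
    then show ?case using Suc by (simp add: mod_Suc_eq)
  qed simp
  have orbit_inj: "p = q" if "(\<sigma>^^p) z = (\<sigma>^^q) z" "p < N" "q < N" for p q
    using add_mod_cancel_less[of "pos z" p N q] pos_orbit[of p] pos_orbit[of q] that by simp
  have "distinct L" unfolding L_def distinct_map using orbit_inj by (auto simp: inj_on_def)
  moreover have "length L = N" by (simp add: L_def)
  moreover have "set L \<subseteq> W" using orbit_in by (auto simp: L_def)
  ultimately have set_L: "set L = W"
    using fin by (simp add: N_def distinct_card card_subset_eq)
  have orbit_closes: "(\<sigma>^^N) z = z"
  proof -
    obtain p where p: "p < N" "(\<sigma>^^N) z = (\<sigma>^^p) z"
      using orbit_in[of N] set_L by (auto simp: L_def)
    then have "(pos z + p) mod N = (pos z + 0) mod N" using pos_orbit[of p] pos_orbit[of N] by simp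
    then show ?thesis using add_mod_cancel_less[of "pos z" p N 0] p N0 by simp
  qed
  have next_L: "L ! ((i + 1) mod N) = \<sigma> (L ! i)" if "i < N" for i
  proof (cases "i + 1 < N")
    case False
    then have "i + 1 = N" using that by simp
    then have "L ! ((i + 1) mod N) = (\<sigma>^^Suc i) z" using N0 orbit_closes by (simp add: L_def)
    then show ?thesis using that by (simp add: L_def del: upt_Suc)
  qed (use that in \<open>simp add: L_def del: upt_Suc\<close>)
  have "dcycle_arcs L = {(L ! i, \<sigma> (L ! i)) | i. i < N}"
    unfolding dcycle_arcs_def \<open>length L = N\<close> using next_L by auto
  also have "\<dots> = (\<lambda>x. (x, \<sigma> x)) ` set L"
    by (force simp: in_set_conv_nth \<open>length L = N\<close>)
  finally have "dcycle_arcs L = (\<lambda>x. (x, \<sigma> x)) ` set L" .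
  then show ?thesis using \<open>distinct L\<close> set_L unfolding single_cycle_on_def by blast
qed

lemma dcycle_arcs_conv_image:
  "dcycle_arcs xs = (\<lambda>i. (xs ! i, xs ! (Suc i mod length xs))) ` {..<length xs}"
  by (auto simp: dcycle_arcs_def)

lemma dcycle_arcs_iff:
  "(u, v) \<in> dcycle_arcs c \<longleftrightarrow> (\<exists>k<length c. u = c ! k \<and> v = c ! (Suc k mod length c))"
  by (auto simp: dcycle_arcs_def)

lemma dcycle_arcs_map:
  "dcycle_arcs (map g L) = (\<lambda>(a, b). (g a, g b)) ` dcycle_arcs L"
proof -
  have "Suc i mod length L < length L" if "i < length L" for i
    using that by (cases L) auto
  then show ?thesis unfolding dcycle_arcs_conv_image image_image by (auto intro!: image_cong)
qed

definition cycle_partition :: "nat \<Rightarrow> 'a set \<Rightarrow> 'a list set \<Rightarrow> bool" where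
  "cycle_partition l V Cs \<longleftrightarrow> (\<forall>c\<in>Cs. distinct c \<and> length c = l) \<and>
     (\<forall>c\<in>Cs. \<forall>d\<in>Cs. c \<noteq> d \<longrightarrow> set c \<inter> set d = {}) \<and> \<Union>(set ` Cs) = V"

lemma is_dcycle_factor_iff:
  "is_dcycle_factor l V A F \<longleftrightarrow>
     F \<subseteq> A \<and> (\<exists>Cs. cycle_partition l V Cs \<and> F = \<Union>(dcycle_arcs ` Cs))"
  by (simp add: is_dcycle_factor_def cycle_partition_def conj_assoc)

lemma cycle_partition_nth_eq:
  assumes "cycle_partition l V Cs" "c \<in> Cs" "d \<in> Cs" "i < l" "j < l" "c ! i = d ! j"
  shows "c = d \<and> i = j"
proof -
  have "c ! i \<in> set c \<inter> set d"
    using assms nth_mem[of i c] nth_mem[of j d] by (auto simp: cycle_partition_def)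
  then have "c = d" using assms(1-3) by (auto simp: cycle_partition_def)
  then show ?thesis using assms nth_eq_iff_index_eq[of c i j] by (auto simp: cycle_partition_def)
qed

lemma cycle_partition_obtain:
  assumes "cycle_partition l V Cs" "y \<in> V"
  obtains c k where "c \<in> Cs" "k < l" "c ! k = y"
  using assms by (fastforce simp: cycle_partition_def in_set_conv_nth)

section \<open>Blowing up a cycle factor\<close>

text \<open>Vertex \<open>3y + i\<close> of \<open>K*\<^sub>3\<^sub>n\<close> is copy \<open>i\<close> of vertex \<open>y\<close> of \<open>K*\<^sub>n\<close>. A point \<open>(k, i)\<close> of
  \<open>grid m\<close> stands for copy \<open>i\<close> of the \<open>k\<close>-th vertex of an \<open>m\<close>-cycle \<open>c\<close>, i.e. for \<open>blowup c (k, i)\<close>;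
  \<open>nbhd m x\<close> is the out-neighbourhood of \<open>x\<close> in the lexicographic product of the directed
  \<open>m\<close>-cycle with \<open>K*\<^sub>3\<close>.\<close>

definition grid :: "nat \<Rightarrow> (nat \<times> nat) set" where
  "grid m = {..<m} \<times> {..<3}"

definition blowup :: "nat list \<Rightarrow> nat \<times> nat \<Rightarrow> nat" where
  "blowup c x = 3 * c ! fst x + snd x"

definition lift_arcs :: "nat \<Rightarrow> nat list set \<Rightarrow> (nat \<times> nat \<Rightarrow> nat \<times> nat) \<Rightarrow> (nat \<times> nat) set" where
  "lift_arcs m Cs \<sigma> = {(blowup c x, blowup c (\<sigma> x)) | c x. c \<in> Cs \<and> x \<in> grid m}"

definition forward_nbhd :: "nat \<Rightarrow> nat \<times> nat \<Rightarrow> (nat \<times> nat) set" where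
  "forward_nbhd m x = {Suc (fst x) mod m} \<times> {..<3}"

definition nbhd :: "nat \<Rightarrow> nat \<times> nat \<Rightarrow> (nat \<times> nat) set" where
  "nbhd m x = ({fst x} \<times> {..<3} - {x}) \<union> forward_nbhd m x"

lemma card_grid: "card (grid m) = 3 * m"
  by (simp add: grid_def card_cartesian_product)

lemma Suc_mod_neq:
  fixes k m :: nat
  assumes "2 \<le> m" "k < m"
  shows "Suc k mod m \<noteq> k"
  using assms by (cases "Suc k = m") auto

lemma nbhd_subset_grid:
  assumes "2 \<le> m" "x \<in> grid m"
  shows "nbhd m x \<subseteq> grid m - {x}"
  using assms Suc_mod_neq[OF assms(1), of "fst x"]
  by (auto simp: nbhd_def forward_nbhd_def grid_def)

lemma blowup_div_mod:
  assumes "x \<in> grid m"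
  shows "blowup c x div 3 = c ! fst x" "blowup c x mod 3 = snd x"
  using assms by (auto simp: blowup_def grid_def)

lemma blowup_eq_iff:
  assumes "cycle_partition m V Cs" "c \<in> Cs" "d \<in> Cs" "x \<in> grid m" "y \<in> grid m"
  shows "blowup c x = blowup d y \<longleftrightarrow> c = d \<and> x = y"
proof
  assume "blowup c x = blowup d y"
  then have "c ! fst x = d ! fst y" "snd x = snd y"
    using blowup_div_mod[OF assms(4)] blowup_div_mod[OF assms(5)] by metis+
  then show "c = d \<and> x = y"
    using cycle_partition_nth_eq[OF assms(1-3)] assms(4,5) by (auto simp: grid_def prod_eq_iff)
qed simp

lemma blowup_less:
  assumes "cycle_partition m {0..<n} Cs" "c \<in> Cs" "x \<in> grid m"
  shows "blowup c x < 3 * n"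
proof -
  have "c ! fst x \<in> set c" using assms by (auto simp: cycle_partition_def grid_def)
  then have "c ! fst x < n" using assms(1,2) by (auto simp: cycle_partition_def)
  then show ?thesis using assms(3) by (auto simp: blowup_def grid_def)
qed

lemma blowup_surj:
  assumes "cycle_partition m {0..<n} Cs" "u < 3 * n"
  obtains c x where "c \<in> Cs" "x \<in> grid m" "blowup c x = u"
proof -
  have "u div 3 \<in> {0..<n}" using assms(2) by auto
  then obtain c k where "c \<in> Cs" "k < m" "c ! k = u div 3"
    using cycle_partition_obtain[OF assms(1)] by metis
  then show thesis using that[of c "(k, u mod 3)"] by (simp add: grid_def blowup_def)
qed

lemma cycle_partition_lift:
  assumes part: "cycle_partition m {0..<n} Cs" and L: "distinct L" "set L = grid m"
  shows "cycle_partition (3 * m) {0..<3 * n} ((\<lambda>c. map (blowup c) L) ` Cs)"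
proof -
  have inj: "inj_on (blowup c) (grid m)" if "c \<in> Cs" for c
    using blowup_eq_iff[OF part that that] by (auto intro: inj_onI)
  have "length L = 3 * m" using L distinct_card card_grid by metis
  then have cycles: "distinct (map (blowup c) L) \<and> length (map (blowup c) L) = 3 * m" if "c \<in> Cs" for c
    using inj[OF that] L by (simp add: distinct_map)
  have disjoint: "blowup c ` grid m \<inter> blowup d ` grid m = {}"
    if "c \<in> Cs" "d \<in> Cs" "c \<noteq> d" for c d
  proof -
    have "blowup c x \<noteq> blowup d y" if "x \<in> grid m" "y \<in> grid m" for x y
      using blowup_eq_iff[OF part \<open>c \<in> Cs\<close> \<open>d \<in> Cs\<close> that] \<open>c \<noteq> d\<close> by simp
    then show ?thesis by blast
  qed
  have "(\<Union>c\<in>Cs. blowup c ` grid m) \<subseteq> {0..<3 * n}"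
    using blowup_less[OF part] by auto
  moreover have "{0..<3 * n} \<subseteq> (\<Union>c\<in>Cs. blowup c ` grid m)"
  proof
    fix u assume "u \<in> {0..<3 * n}"
    then obtain c x where "c \<in> Cs" "x \<in> grid m" "blowup c x = u"
      using blowup_surj[OF part, of u] by auto
    then show "u \<in> (\<Union>c\<in>Cs. blowup c ` grid m)" by blast
  qed
  ultimately have "(\<Union>c\<in>Cs. blowup c ` grid m) = {0..<3 * n}" by (rule antisym)
  then show ?thesis
    using cycles disjoint L(2) unfolding cycle_partition_def by (simp add: ball_simps) metis
qed

lemma lift_arcs_is_dcycle_factor:
  assumes "2 \<le> m" and part: "cycle_partition m {0..<n} Cs"
    and "single_cycle_on (grid m) \<sigma>" and nbhd: "\<And>x. x \<in> grid m \<Longrightarrow> \<sigma> x \<in> nbhd m x"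
  shows "is_dcycle_factor (3 * m) {0..<3 * n} (complete_sym_digraph (3 * n)) (lift_arcs m Cs \<sigma>)"
proof -
  obtain L where L: "distinct L" "set L = grid m" "dcycle_arcs L = (\<lambda>x. (x, \<sigma> x)) ` grid m"
    using assms(3) unfolding single_cycle_on_def by blast
  have \<sigma>: "\<sigma> x \<in> grid m" "\<sigma> x \<noteq> x" if "x \<in> grid m" for x
    using nbhd_subset_grid[OF assms(1) that] nbhd[OF that] by auto
  have "(\<Union>c\<in>Cs. dcycle_arcs (map (blowup c) L)) =
        (\<Union>c\<in>Cs. (\<lambda>x. (blowup c x, blowup c (\<sigma> x))) ` grid m)"
    by (simp add: dcycle_arcs_map L(3) image_image)
  then have arcs: "lift_arcs m Cs \<sigma> = \<Union>(dcycle_arcs ` (\<lambda>c. map (blowup c) L) ` Cs)"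
    by (auto simp: lift_arcs_def)
  have "lift_arcs m Cs \<sigma> \<subseteq> complete_sym_digraph (3 * n)"
  proof
    fix e assume "e \<in> lift_arcs m Cs \<sigma>"
    then obtain c x where cx: "c \<in> Cs" "x \<in> grid m" "e = (blowup c x, blowup c (\<sigma> x))"
      unfolding lift_arcs_def by blast
    have "blowup c x \<noteq> blowup c (\<sigma> x)"
      using blowup_eq_iff[OF part cx(1) cx(1) cx(2) \<sigma>(1)[OF cx(2)]] \<sigma>(2)[OF cx(2)] by simp
    then show "e \<in> complete_sym_digraph (3 * n)"
      using blowup_less[OF part cx(1)] cx(2) \<sigma>(1)[OF cx(2)]
      by (simp add: cx(3) complete_sym_digraph_def)
  qed
  with arcs cycle_partition_lift[OF part L(1,2)] show ?thesis
    unfolding is_dcycle_factor_iff by blast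
qed

lemma blowup_forward_arc:
  assumes "cycle_partition m V Cs" "c \<in> Cs" "x \<in> grid m" "y \<in> forward_nbhd m x"
  shows "(blowup c x div 3, blowup c y div 3) \<in> dcycle_arcs c"
proof -
  have "y \<in> grid m" "fst y = Suc (fst x) mod m" "length c = m" "fst x < m"
    using assms by (auto simp: forward_nbhd_def grid_def cycle_partition_def)
  then show ?thesis
    by (auto simp: blowup_div_mod[OF assms(3)] blowup_div_mod[OF \<open>y \<in> grid m\<close>] dcycle_arcs_iff)
qed

lemma lift_arcs_common_point:
  assumes part: "cycle_partition m V Cs"
    and "\<And>x. x \<in> grid m \<Longrightarrow> \<sigma> x \<in> grid m" "\<And>x. x \<in> grid m \<Longrightarrow> \<tau> x \<in> grid m"
    and "e \<in> lift_arcs m Cs \<sigma>" "e \<in> lift_arcs m Cs \<tau>"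
  shows "\<exists>x\<in>grid m. \<sigma> x = \<tau> x"
proof -
  obtain c x d y where cx: "c \<in> Cs" "x \<in> grid m" "e = (blowup c x, blowup c (\<sigma> x))"
    and dy: "d \<in> Cs" "y \<in> grid m" "e = (blowup d y, blowup d (\<tau> y))"
    using assms(4,5) unfolding lift_arcs_def by blast
  then have "c = d \<and> x = y" using blowup_eq_iff[OF part cx(1) dy(1) cx(2) dy(2)] by simp
  then have "blowup c (\<sigma> x) = blowup c (\<tau> x)" using cx(3) dy(3) by simp
  then show ?thesis
    using blowup_eq_iff[OF part cx(1) cx(1)] assms(2,3) cx(2) by blast
qed

section \<open>Lifting a factorization along templates\<close>

locale blowup_templates =
  fixes m n :: nat
    and FF :: "(nat \<times> nat) set set"
    and cycles :: "(nat \<times> nat) set \<Rightarrow> nat list set"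
    and F0 :: "(nat \<times> nat) set"
    and S0 S1 :: "(nat \<times> nat \<Rightarrow> nat \<times> nat) set"
  assumes two_le_m: "2 \<le> m"
    and partition: "F \<in> FF \<Longrightarrow> cycle_partition m {0..<n} (cycles F)"
    and factor_arcs: "F \<in> FF \<Longrightarrow> F = \<Union>(dcycle_arcs ` cycles F)"
    and factors_disjoint: "F \<in> FF \<Longrightarrow> G \<in> FF \<Longrightarrow> F \<noteq> G \<Longrightarrow> F \<inter> G = {}"
    and Union_factors: "\<Union>FF = complete_sym_digraph n"
    and F0: "F0 \<in> FF"
    and S0: "x \<in> grid m \<Longrightarrow> bij_betw (\<lambda>\<sigma>. \<sigma> x) S0 (nbhd m x)"
    and S1: "x \<in> grid m \<Longrightarrow> bij_betw (\<lambda>\<sigma>. \<sigma> x) S1 (forward_nbhd m x)"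
    and single_cycle: "\<sigma> \<in> S0 \<union> S1 \<Longrightarrow> single_cycle_on (grid m) \<sigma>"
begin

definition templates :: "(nat \<times> nat) set \<Rightarrow> (nat \<times> nat \<Rightarrow> nat \<times> nat) set" where
  "templates F = (if F = F0 then S0 else S1)"

definition lifted_factors :: "(nat \<times> nat) set set" where
  "lifted_factors = {lift_arcs m (cycles F) \<sigma> | F \<sigma>. F \<in> FF \<and> \<sigma> \<in> templates F}"

lemma templates_bij:
  assumes "x \<in> grid m"
  shows "bij_betw (\<lambda>\<sigma>. \<sigma> x) (templates F) (if F = F0 then nbhd m x else forward_nbhd m x)"
  using S0[OF assms] S1[OF assms] by (simp add: templates_def)

lemma template_nbhd:
  assumes "\<sigma> \<in> templates F" "x \<in> grid m"
  shows "\<sigma> x \<in> nbhd m x"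
  using bij_betwE[OF templates_bij[OF assms(2), of F]] assms(1)
  by (auto simp: nbhd_def split: if_splits)

lemma template_forward:
  assumes "\<sigma> \<in> templates F" "F \<noteq> F0" "x \<in> grid m"
  shows "\<sigma> x \<in> forward_nbhd m x"
  using bij_betwE[OF templates_bij[OF assms(3), of F]] assms by simp

lemma template_covers:
  assumes "x \<in> grid m" "y \<in> forward_nbhd m x \<or> (F = F0 \<and> y \<in> nbhd m x)"
  obtains \<sigma> where "\<sigma> \<in> templates F" "\<sigma> x = y"
proof -
  have "y \<in> (if F = F0 then nbhd m x else forward_nbhd m x)"
    using assms(2) by (auto simp: nbhd_def)
  then have "y \<in> (\<lambda>\<sigma>. \<sigma> x) ` templates F"
    using bij_betw_imp_surj_on[OF templates_bij[OF assms(1), of F]] by simp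
  then show thesis using that by blast
qed

lemma template_grid: "\<sigma> \<in> templates F \<Longrightarrow> x \<in> grid m \<Longrightarrow> \<sigma> x \<in> grid m"
  using template_nbhd nbhd_subset_grid[OF two_le_m] by blast

lemma lifted_factor:
  assumes "F \<in> FF" "\<sigma> \<in> templates F"
  shows "is_dcycle_factor (3 * m) {0..<3 * n} (complete_sym_digraph (3 * n)) (lift_arcs m (cycles F) \<sigma>)"
proof -
  have "single_cycle_on (grid m) \<sigma>"
    using single_cycle assms(2) by (auto simp: templates_def split: if_splits)
  then show ?thesis
    using lift_arcs_is_dcycle_factor[OF two_le_m partition[OF assms(1)]] template_nbhd[OF assms(2)]
    by blast
qed

lemma lift_arcs_meet_same_factor:
  assumes "F1 \<in> FF" "F2 \<in> FF" "F1 \<noteq> F0" "\<sigma>1 \<in> templates F1" "\<sigma>2 \<in> templates F2"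
    and "e \<in> lift_arcs m (cycles F1) \<sigma>1" "e \<in> lift_arcs m (cycles F2) \<sigma>2"
  shows "F1 = F2"
proof -
  obtain c1 x1 where c1: "c1 \<in> cycles F1" "x1 \<in> grid m" "e = (blowup c1 x1, blowup c1 (\<sigma>1 x1))"
    using assms(6) unfolding lift_arcs_def by blast
  obtain c2 x2 where c2: "c2 \<in> cycles F2" "x2 \<in> grid m" "e = (blowup c2 x2, blowup c2 (\<sigma>2 x2))"
    using assms(7) unfolding lift_arcs_def by blast
  define a where "a = (fst e div 3, snd e div 3)"
  have "a \<in> dcycle_arcs c1"
    using blowup_forward_arc[OF partition[OF assms(1)] c1(1,2) template_forward[OF assms(4,3) c1(2)]]
      c1(3) by (simp add: a_def)
  then have "a \<in> F1" using factor_arcs[OF assms(1)] c1(1) by blast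
  then have "a \<in> complete_sym_digraph n" using Union_factors assms(1) by blast
  then have "fst a \<noteq> snd a" by (auto simp: complete_sym_digraph_def)
  have "\<sigma>2 x2 \<in> forward_nbhd m x2"
  proof (rule ccontr)
    assume "\<sigma>2 x2 \<notin> forward_nbhd m x2"
    then have "fst (\<sigma>2 x2) = fst x2"
      using template_nbhd[OF assms(5) c2(2)] by (auto simp: nbhd_def)
    then show False
      using \<open>fst a \<noteq> snd a\<close> c2 template_grid[OF assms(5) c2(2)]
      by (simp add: a_def blowup_div_mod)
  qed
  then have "a \<in> dcycle_arcs c2"
    using blowup_forward_arc[OF partition[OF assms(2)] c2(1,2)] c2(3) by (simp add: a_def)
  then have "a \<in> F2" using factor_arcs[OF assms(2)] c2(1) by blast
  then show ?thesis using \<open>a \<in> F1\<close> factors_disjoint assms(1,2) by blast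
qed

lemma lifted_factors_disjoint:
  assumes "G1 \<in> lifted_factors" "G2 \<in> lifted_factors" "G1 \<noteq> G2"
  shows "G1 \<inter> G2 = {}"
proof (rule ccontr)
  assume "G1 \<inter> G2 \<noteq> {}"
  then obtain e where e: "e \<in> G1" "e \<in> G2" by blast
  obtain F1 \<sigma>1 F2 \<sigma>2 where G: "F1 \<in> FF" "\<sigma>1 \<in> templates F1" "G1 = lift_arcs m (cycles F1) \<sigma>1"
    "F2 \<in> FF" "\<sigma>2 \<in> templates F2" "G2 = lift_arcs m (cycles F2) \<sigma>2"
    using assms(1,2) unfolding lifted_factors_def by blast
  have "F1 = F2"
  proof (cases "F1 = F0")
    case True
    show ?thesis
    proof (cases "F2 = F0")
      case False
      then show ?thesis using lift_arcs_meet_same_factor[OF G(4,1) False G(5,2), of e] e G(3,6) by simp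
    qed (simp add: True)
  next
    case False
    then show ?thesis using lift_arcs_meet_same_factor[OF G(1,4) False G(2,5), of e] e G(3,6) by simp
  qed
  then have e': "e \<in> lift_arcs m (cycles F1) \<sigma>1" "e \<in> lift_arcs m (cycles F1) \<sigma>2"
    and \<sigma>2: "\<sigma>2 \<in> templates F1"
    using e G by simp_all
  obtain x where x: "x \<in> grid m" "\<sigma>1 x = \<sigma>2 x"
    using lift_arcs_common_point[OF partition[OF G(1)] template_grid[OF G(2)] template_grid[OF \<sigma>2] e']
    by blast
  have "\<sigma>1 = \<sigma>2"
    using inj_onD[OF bij_betw_imp_inj_on[OF templates_bij[OF x(1)]] x(2) G(2) \<sigma>2] .
  then show False using assms(3) G(3,6) \<open>F1 = F2\<close> by simp
qed

lemma lift_arc_in_lifted_factors: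
  assumes "F \<in> FF" "c \<in> cycles F" "x \<in> grid m" "\<sigma> \<in> templates F"
  shows "(blowup c x, blowup c (\<sigma> x)) \<in> \<Union>lifted_factors"
  using assms unfolding lifted_factors_def lift_arcs_def by blast

lemma Union_lifted_factors: "\<Union>lifted_factors = complete_sym_digraph (3 * n)"
proof
  show "\<Union>lifted_factors \<subseteq> complete_sym_digraph (3 * n)"
    using lifted_factor unfolding lifted_factors_def is_dcycle_factor_iff by blast
next
  show "complete_sym_digraph (3 * n) \<subseteq> \<Union>lifted_factors"
  proof safe
    fix u v assume "(u, v) \<in> complete_sym_digraph (3 * n)"
    then have uv: "u < 3 * n" "v < 3 * n" "u \<noteq> v" by (auto simp: complete_sym_digraph_def)
    show "(u, v) \<in> \<Union>lifted_factors"
    proof (cases "u div 3 = v div 3")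
      case True
      have "u div 3 \<in> {0..<n}" using uv(1) by auto
      then obtain c k where c: "c \<in> cycles F0" "k < m" "c ! k = u div 3"
        using cycle_partition_obtain[OF partition[OF F0]] by metis
      define x where "x = (k, u mod 3)"
      have x: "x \<in> grid m" using c(2) by (simp add: x_def grid_def)
      have "u mod 3 \<noteq> v mod 3" using True uv(3) by (metis div_mult_mod_eq)
      then have "(k, v mod 3) \<in> nbhd m x" by (simp add: x_def nbhd_def)
      then obtain \<sigma> where "\<sigma> \<in> templates F0" "\<sigma> x = (k, v mod 3)"
        using template_covers[OF x] by blast
      moreover have "u = blowup c x" using c(3) by (simp add: x_def blowup_def)
      moreover have "v = blowup c (k, v mod 3)" using c(3) True by (simp add: blowup_def)
      ultimately show ?thesis using lift_arc_in_lifted_factors[OF F0 c(1) x] by metis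
    next
      case False
      then have "(u div 3, v div 3) \<in> \<Union>FF"
        using uv Union_factors by (auto simp: complete_sym_digraph_def)
      then obtain F c where F: "F \<in> FF" "c \<in> cycles F" "(u div 3, v div 3) \<in> dcycle_arcs c"
        using factor_arcs by blast
      then obtain k where k: "k < m" "c ! k = u div 3" "c ! (Suc k mod m) = v div 3"
        using partition[OF F(1)] by (auto simp: dcycle_arcs_iff cycle_partition_def)
      define x where "x = (k, u mod 3)"
      have x: "x \<in> grid m" using k(1) by (simp add: x_def grid_def)
      have "(Suc k mod m, v mod 3) \<in> forward_nbhd m x" by (simp add: x_def forward_nbhd_def)
      then obtain \<sigma> where "\<sigma> \<in> templates F" "\<sigma> x = (Suc k mod m, v mod 3)"
        using template_covers[OF x] by blast
      moreover have "u = blowup c x" "v = blowup c (Suc k mod m, v mod 3)"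
        using k by (simp_all add: x_def blowup_def)
      ultimately show ?thesis using lift_arc_in_lifted_factors[OF F(1,2) x] by metis
    qed
  qed
qed

theorem has_dcycle_factorization_lift:
  "has_dcycle_factorization (3 * m) {0..<3 * n} (complete_sym_digraph (3 * n))"
proof -
  have "is_dcycle_factor (3 * m) {0..<3 * n} (complete_sym_digraph (3 * n)) G"
    if "G \<in> lifted_factors" for G
    using that lifted_factor unfolding lifted_factors_def by blast
  then show ?thesis
    unfolding has_dcycle_factorization_def
    by (intro exI[of _ lifted_factors] conjI ballI impI lifted_factors_disjoint Union_lifted_factors)
qed

end

lemma dcycle_factorization_length_ge_2:
  assumes "has_dcycle_factorization l {0..<n} (complete_sym_digraph n)" "2 \<le> n"
  shows "2 \<le> l"
proof -
  obtain FF where FF: "\<forall>F\<in>FF. is_dcycle_factor l {0..<n} (complete_sym_digraph n) F"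
    "\<Union>FF = complete_sym_digraph n"
    using assms(1) unfolding has_dcycle_factorization_def by (elim exE conjE)
  have "(0, 1) \<in> complete_sym_digraph n" using assms(2) by (simp add: complete_sym_digraph_def)
  then obtain F where "F \<in> FF" "(0, 1) \<in> F" using FF(2) by blast
  then have "is_dcycle_factor l {0..<n} (complete_sym_digraph n) F" using FF(1) by blast
  then obtain Cs where Cs: "cycle_partition l {0..<n} Cs" "F = \<Union>(dcycle_arcs ` Cs)"
    unfolding is_dcycle_factor_iff by blast
  then obtain c where c: "c \<in> Cs" "(0, 1) \<in> dcycle_arcs c"
    using \<open>(0, 1) \<in> F\<close> by blast
  then have "length c = l" using Cs(1) by (simp add: cycle_partition_def)
  then obtain k where "k < l" "c ! k = 0" "c ! (Suc k mod l) = 1"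
    using c(2) unfolding dcycle_arcs_iff by metis
  then show ?thesis by (cases "l = 1") auto
qed

lemma has_dcycle_factorization_blowup:
  assumes "2 \<le> n" and factorization: "has_dcycle_factorization m {0..<n} (complete_sym_digraph n)"
    and "\<And>x. x \<in> grid m \<Longrightarrow> bij_betw (\<lambda>\<sigma>. \<sigma> x) S0 (nbhd m x)"
    and "\<And>x. x \<in> grid m \<Longrightarrow> bij_betw (\<lambda>\<sigma>. \<sigma> x) S1 (forward_nbhd m x)"
    and "\<And>\<sigma>. \<sigma> \<in> S0 \<union> S1 \<Longrightarrow> single_cycle_on (grid m) \<sigma>"
  shows "has_dcycle_factorization (3 * m) {0..<3 * n} (complete_sym_digraph (3 * n))"
proof -
  obtain FF where FF: "\<forall>F\<in>FF. is_dcycle_factor m {0..<n} (complete_sym_digraph n) F"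
    "\<forall>F\<in>FF. \<forall>G\<in>FF. F \<noteq> G \<longrightarrow> F \<inter> G = {}" "\<Union>FF = complete_sym_digraph n"
    using factorization unfolding has_dcycle_factorization_def by (elim exE conjE)
  have "\<forall>F\<in>FF. \<exists>Cs. cycle_partition m {0..<n} Cs \<and> F = \<Union>(dcycle_arcs ` Cs)"
    using FF(1) unfolding is_dcycle_factor_iff by blast
  then obtain cycles where cycles:
    "\<forall>F\<in>FF. cycle_partition m {0..<n} (cycles F) \<and> F = \<Union>(dcycle_arcs ` cycles F)"
    by (auto dest: bchoice)
  have "(0, 1) \<in> complete_sym_digraph n" using assms(1) by (simp add: complete_sym_digraph_def)
  then obtain F0 where "F0 \<in> FF" using FF(3) by blast
  interpret blowup_templates m n FF cycles F0 S0 S1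
  proof
    show "2 \<le> m" using dcycle_factorization_length_ge_2[OF factorization assms(1)] .
    fix F G assume "F \<in> FF"
    then show "cycle_partition m {0..<n} (cycles F)" "F = \<Union>(dcycle_arcs ` cycles F)"
      using cycles by blast+
    assume "G \<in> FF" "F \<noteq> G"
    then show "F \<inter> G = {}" using FF(2) \<open>F \<in> FF\<close> by blast
  qed (fact FF(3) \<open>F0 \<in> FF\<close> assms(3-5))+
  show ?thesis by (rule has_dcycle_factorization_lift)
qed

section \<open>Forward templates\<close>

text \<open>The \<open>t\<close>-th forward template raises the copy index by \<open>2t\<close> on the first \<open>fwd_balance m\<close>
  positions, by \<open>t\<close> on the others, and by one more on the last step. As \<open>3\<close> divides
  \<open>m + fwd_balance m\<close>, a full lap therefore raises it by exactly \<open>1\<close> mod 3, whatever \<open>t\<close> is; and at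
  every position the three templates raise it by pairwise different amounts mod 3.
  \<open>fwd_height m t k\<close> is the raise accumulated before position \<open>k\<close>, so that \<open>fwd_pos\<close> reads off the
  number of completed laps as copy index minus height mod 3.\<close>

definition fwd_balance :: "nat \<Rightarrow> nat" where
  "fwd_balance m = 2 * m mod 3"

definition fwd_shift :: "nat \<Rightarrow> nat \<Rightarrow> nat \<Rightarrow> nat" where
  "fwd_shift m t k = t * (if k < fwd_balance m then 2 else 1) + (if Suc k = m then 1 else 0)"

definition fwd_template :: "nat \<Rightarrow> nat \<Rightarrow> nat \<times> nat \<Rightarrow> nat \<times> nat" where
  "fwd_template m t x = (Suc (fst x) mod m, (snd x + fwd_shift m t (fst x)) mod 3)"

definition fwd_height :: "nat \<Rightarrow> nat \<Rightarrow> nat \<Rightarrow> nat" where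
  "fwd_height m t k = t * (k + min k (fwd_balance m))"

definition fwd_pos :: "nat \<Rightarrow> nat \<Rightarrow> nat \<times> nat \<Rightarrow> nat" where
  "fwd_pos m t x = ((snd x + 2 * fwd_height m t (fst x)) mod 3) * m + fst x"

lemma fwd_height_Suc:
  "fwd_height m t (Suc k) = fwd_height m t k + t * (if k < fwd_balance m then 2 else 1)"
  by (cases "k < fwd_balance m") (auto simp: fwd_height_def min_def algebra_simps)

lemma fwd_height_lap:
  assumes "3 \<le> m"
  shows "(2 * fwd_height m t (m - 1)) mod 3 = t mod 3"
proof -
  define b where "b = fwd_balance m"
  have "b < 3" by (simp add: b_def fwd_balance_def)
  then have "min (m - 1) b = b" using assms by simp
  have "(m + b) mod 3 = (m + 2 * m) mod 3"
    unfolding b_def fwd_balance_def by (rule mod_add_right_eq)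
  also have "\<dots> = 0" by presburger
  finally obtain q where q: "(m - 1 + b) + 1 = 3 * q" using assms by fastforce
  have "2 * fwd_height m t (m - 1) mod 3 = (2 * fwd_height m t (m - 1) + 3 * t) mod 3" by simp
  also have "2 * fwd_height m t (m - 1) + 3 * t = 2 * t * ((m - 1 + b) + 1) + t"
    unfolding fwd_height_def b_def [symmetric] \<open>min (m - 1) b = b\<close> by (simp add: algebra_simps)
  also have "\<dots> = t + (2 * t * q) * 3" unfolding q by simp
  finally show ?thesis by (simp only: mod_mult_self1)
qed

lemma fwd_pos_step:
  assumes m: "3 \<le> m" and x: "x \<in> grid m"
  shows "fwd_pos m t (fwd_template m t x) mod (3 * m) = (fwd_pos m t x + 1) mod (3 * m)"
proof -
  obtain k i where ki: "x = (k, i)" "k < m" "i < 3" using x by (auto simp: grid_def)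
  define r where "r = (i + 2 * fwd_height m t k) mod 3"
  have pos: "fwd_pos m t x = r * m + k" by (simp add: fwd_pos_def r_def ki(1))
  have "r < 3" by (simp add: r_def)
  show ?thesis
  proof (cases "Suc k < m")
    case True
    define s where "s = t * (if k < fwd_balance m then 2 else 1)"
    have "fwd_template m t x = (Suc k, (i + s) mod 3)"
      using True by (simp add: fwd_template_def fwd_shift_def s_def ki(1))
    moreover have "((i + s) mod 3 + 2 * fwd_height m t (Suc k)) mod 3 = r"
    proof -
      have "((i + s) mod 3 + 2 * fwd_height m t (Suc k)) mod 3 = (i + s + 2 * (fwd_height m t k + s)) mod 3"
        by (simp add: fwd_height_Suc s_def mod_add_left_eq)
      also have "i + s + 2 * (fwd_height m t k + s) = (i + 2 * fwd_height m t k) + s * 3" by simp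
      finally show ?thesis by (simp only: mod_mult_self1 r_def)
    qed
    ultimately have "fwd_pos m t (fwd_template m t x) = r * m + Suc k" by (simp add: fwd_pos_def)
    then show ?thesis using pos by simp
  next
    case False
    then have k: "Suc k = m" using ki(2) by simp
    have "\<not> k < fwd_balance m" using k m by (simp add: fwd_balance_def)
    then have "fwd_template m t x = (0, (i + t + 1) mod 3)"
      using k by (simp add: fwd_template_def fwd_shift_def ki(1))
    moreover have "r = (i + t) mod 3"
    proof -
      have "k = m - 1" using k by simp
      then have "r = (i + 2 * fwd_height m t (m - 1) mod 3) mod 3"
        by (simp add: r_def mod_add_right_eq)
      also have "\<dots> = (i + t) mod 3" unfolding fwd_height_lap[OF m] by (simp add: mod_add_right_eq)
      finally show ?thesis .
    qed
    ultimately have "fwd_pos m t (fwd_template m t x) = ((r + 1) mod 3) * m"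
      by (simp add: fwd_pos_def fwd_height_def mod_Suc_eq)
    moreover have "fwd_pos m t x + 1 = (r + 1) * m" using pos k by simp
    ultimately show ?thesis using \<open>r < 3\<close> by (cases "r = 2") auto
  qed
qed

lemma fwd_template_single_cycle:
  assumes "3 \<le> m"
  shows "single_cycle_on (grid m) (fwd_template m t)"
proof (rule single_cycle_onI[where z = "(0, 0)" and pos = "fwd_pos m t"])
  show "fwd_template m t x \<in> grid m" if "x \<in> grid m" for x
    using that assms by (auto simp: fwd_template_def grid_def)
  show "fwd_pos m t (fwd_template m t x) mod card (grid m) = (fwd_pos m t x + 1) mod card (grid m)"
    if "x \<in> grid m" for x
    unfolding card_grid using fwd_pos_step[OF assms that] .
qed (use assms in \<open>auto simp: grid_def\<close>)

lemma fwd_template_bij: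
  assumes "x \<in> grid m"
  shows "bij_betw (\<lambda>\<sigma>. \<sigma> x) (fwd_template m ` {..<3}) (forward_nbhd m x)"
proof -
  define a where "a = snd x + (if Suc (fst x) = m then 1 else 0)"
  define c :: nat where "c = (if fst x < fwd_balance m then 2 else 1)"
  have layer: "fwd_template m t x = (Suc (fst x) mod m, (a + c * t) mod 3)" for t
    by (simp add: fwd_template_def fwd_shift_def a_def c_def algebra_simps)
  have "(a + c * t) mod 3 \<noteq> (a + c * t') mod 3" if "t < 3" "t' < 3" "t \<noteq> t'" for t t'
  proof -
    have "t \<in> {0, 1, 2}" "t' \<in> {0, 1, 2}" "c \<in> {1, 2}" using that by (auto simp: c_def)
    then have "(c * t) mod 3 \<noteq> (c * t') mod 3" using \<open>t \<noteq> t'\<close> by auto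
    then show ?thesis by (simp add: add_mod_cancel_left)
  qed
  then have "inj_on (\<lambda>t. (a + c * t) mod 3) {..<3}" by (auto intro: inj_onI)
  moreover have "(\<lambda>t. (a + c * t) mod 3) ` {..<3} \<subseteq> {..<3}" by auto
  ultimately have "(\<lambda>t. (a + c * t) mod 3) ` {..<3} = {..<3}" by (simp add: endo_inj_surj)
  moreover have "(\<lambda>t. fwd_template m t x) ` {..<3} =
      {Suc (fst x) mod m} \<times> (\<lambda>t. (a + c * t) mod 3) ` {..<3}"
    unfolding layer by auto
  ultimately have "(\<lambda>t. fwd_template m t x) ` {..<3} = forward_nbhd m x"
    by (simp add: forward_nbhd_def)
  moreover have "inj_on (\<lambda>t. fwd_template m t x) {..<3}"
  proof (rule inj_onI)
    fix t t' assume t: "t \<in> {..<3}" "t' \<in> {..<3}" and "fwd_template m t x = fwd_template m t' x"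
    then have "(a + c * t) mod 3 = (a + c * t') mod 3" unfolding layer by simp
    then show "t = t'" using inj_onD[OF \<open>inj_on (\<lambda>t. (a + c * t) mod 3) {..<3}\<close> _ t] by simp
  qed
  ultimately show ?thesis using bij_betw_apply_image[of "fwd_template m" x "{..<3}"] by simp
qed

section \<open>Mixed templates for odd \<open>m\<close>\<close>

text \<open>Entry \<open>mixed_offsets ! c ! i ! f\<close> is the step (position offset, copy offset) of template \<open>f\<close> from
  copy \<open>i\<close> at a position of class \<open>c\<close>: class \<open>0\<close> are the positions \<open>k < m - 3\<close>, classes \<open>1, 2, 3\<close>
  the positions \<open>m - 3, m - 2, m - 1\<close>. \<open>mixed_pos m f x\<close> is the position of \<open>x\<close> on the cycle of
  template \<open>f\<close> through \<open>(0, 0)\<close>; templates \<open>2\<close> and \<open>3\<close> pass through the generic positions in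
  pairs \<open>2a, 2a + 1\<close>, which is where oddness of \<open>m\<close> is used.\<close>

definition mixed_offsets :: "(nat \<times> nat) list list list" where
  "mixed_offsets = [
    [[(0,1),(0,2),(1,1),(1,2),(1,0)],[(0,1),(0,2),(1,1),(1,2),(1,0)],[(1,1),(1,2),(0,1),(0,2),(1,0)]],
    [[(0,1),(0,2),(1,0),(1,1),(1,2)],[(0,1),(0,2),(1,0),(1,1),(1,2)],[(1,0),(1,1),(0,1),(0,2),(1,2)]],
    [[(1,0),(0,1),(0,2),(1,1),(1,2)],[(0,2),(0,1),(1,0),(1,1),(1,2)],[(0,2),(1,0),(1,1),(0,1),(1,2)]],
    [[(0,1),(1,1),(0,2),(1,2),(1,0)],[(0,1),(0,2),(1,1),(1,2),(1,0)],[(1,1),(0,2),(1,2),(0,1),(1,0)]]]"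

definition mixed_class :: "nat \<Rightarrow> nat \<Rightarrow> nat" where
  "mixed_class m k = (if k < m - 3 then 0 else if k = m - 3 then 1 else if k = m - 2 then 2 else 3)"

definition offset_shift :: "nat \<Rightarrow> nat \<times> nat \<Rightarrow> nat \<times> nat \<Rightarrow> nat \<times> nat" where
  "offset_shift m x d = ((fst x + fst d) mod m, (snd x + snd d) mod 3)"

definition mixed_template :: "nat \<Rightarrow> nat \<Rightarrow> nat \<times> nat \<Rightarrow> nat \<times> nat" where
  "mixed_template m f x = offset_shift m x (mixed_offsets ! mixed_class m (fst x) ! snd x ! f)"

definition mixed_pos :: "nat \<Rightarrow> nat \<Rightarrow> nat \<times> nat \<Rightarrow> nat" where
  "mixed_pos m f x = (let k = fst x; i = snd x; h = m div 2; a = k div 2 in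
     if f = 0 then 3 * k + (if k = m - 2 then 2 - i else i)
     else if f = 1 then 3 * k + (if k \<le> m - 3 then [1,0,2] ! i else if k = m - 2 then i else 2 - i)
     else if f = 4 then k + m * (if k \<le> m - 3 then i else if k = m - 2 then (i + 1) mod 3 else (i + 2) mod 3)
     else if f = 2 then
       (if k \<le> m - 3 then (if even k then [3*a+3*h+1, 3*a, 3*a+3*h] ! i else [3*a+2, 3*a+3*h+2, 3*a+1] ! i)
        else if k = m - 2 then [6*h-1, 3*h-2, 6*h] ! i else [6*h+1, 3*h-1, 6*h+2] ! i)
     else
       (if k \<le> m - 3 then (if even k then [3*a, 3*a+3*h+2, 3*a+3*h+1] ! i else [3*a+3*h+3, 3*a+2, 3*a+1] ! i)
        else if k = m - 2 then [6*h+1, 3*h-2, 6*h] ! i else [3*h, 6*h+2, 3*h-1] ! i))"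

lemma mixed_pos_step:
  assumes m: "m = 2 * g + 3" and x: "x \<in> grid m" and f: "f < 5"
  shows "mixed_pos m f (mixed_template m f x) =
    (if mixed_pos m f x + 1 = 3 * m then 0 else mixed_pos m f x + 1)"
proof -
  obtain k i where ki: "x = (k, i)" "k < m" "i < 3" using x by (auto simp: grid_def)
  have h: "m div 2 = g + 1" using m by simp
  have i: "i = 0 \<or> i = 1 \<or> i = 2" and f: "f = 0 \<or> f = 1 \<or> f = 2 \<or> f = 3 \<or> f = 4"
    using ki(3) f by arith+
  note defs = mixed_template_def mixed_class_def mixed_offsets_def offset_shift_def mixed_pos_def Let_def
  consider (generic) "k < 2 * g" | (third_last) "k = 2 * g" | (second_last) "k = 2 * g + 1"
    | (last) "k = 2 * g + 2"
    using ki(2) m by linarith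
  then show ?thesis
  proof cases
    case generic
    show ?thesis
    proof (cases "even k")
      case True
      define a where "a = k div 2"
      have "k = 2 * a" "a < g" using True generic by (auto simp: a_def)
      then show ?thesis using i f m h ki(1) by (elim disjE; simp add: defs)
    next
      case False
      define a where "a = k div 2"
      have "k = 2 * a + 1" "a < g" using False generic by (auto simp: a_def)
      then show ?thesis using i f m h ki(1) by (elim disjE; simp add: defs)
    qed
  next
    case third_last
    then show ?thesis using i f m h ki(1) by (elim disjE; simp add: defs)
  next
    case second_last
    then show ?thesis using i f m h ki(1) by (elim disjE; simp add: defs)
  next
    case last
    have "Suc (Suc (Suc (2 * g))) = 2 * g + 3" by simp
    then have "Suc (Suc (Suc (2 * g))) mod (2 * g + 3) = 0" by (simp only: mod_self)
    then show ?thesis using last i f m h ki(1) by (elim disjE; simp add: defs)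
  qed
qed

lemma mixed_offsets_image:
  assumes "c < 4" "i < 3"
  shows "(\<lambda>f. mixed_offsets ! c ! i ! f) ` {..<5} = {(0, 1), (0, 2), (1, 0), (1, 1), (1, 2)}"
proof -
  have "c = 0 \<or> c = 1 \<or> c = 2 \<or> c = 3" "i = 0 \<or> i = 1 \<or> i = 2" using assms by arith+
  moreover have "{..<5::nat} = {0, 1, 2, 3, 4}" by auto
  ultimately show ?thesis by (elim disjE; simp add: mixed_offsets_def insert_commute)
qed

lemma offset_shift_image:
  assumes "2 \<le> m" "x \<in> grid m"
  shows "offset_shift m x ` {(0, 1), (0, 2), (1, 0), (1, 1), (1, 2)} = nbhd m x"
proof -
  obtain k i where ki: "x = (k, i)" "k < m" "i < 3" using assms(2) by (auto simp: grid_def)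
  have "i = 0 \<or> i = 1 \<or> i = 2" using ki(3) by arith
  then have layers: "{..<3} - {i} = {(i + 1) mod 3, (i + 2) mod 3}"
    "{..<3} = {i, (i + 1) mod 3, (i + 2) mod 3}"
    by (elim disjE; auto)+
  have "nbhd m x = Pair k ` ({..<3} - {i}) \<union> Pair (Suc k mod m) ` {..<3}"
    by (auto simp: nbhd_def forward_nbhd_def ki(1))
  also have "Pair (Suc k mod m) ` {..<3} =
      {(Suc k mod m, i), (Suc k mod m, (i + 1) mod 3), (Suc k mod m, (i + 2) mod 3)}"
    by (subst layers(2)) simp
  also have "Pair k ` ({..<3} - {i}) = {(k, (i + 1) mod 3), (k, (i + 2) mod 3)}"
    unfolding layers(1) by simp
  finally show ?thesis using ki by (auto simp: offset_shift_def)
qed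

lemma card_nbhd:
  assumes "2 \<le> m" "x \<in> grid m"
  shows "card (nbhd m x) = 5"
proof -
  have "x \<in> {fst x} \<times> {..<3}" using assms(2) by (auto simp: grid_def)
  then have "card ({fst x} \<times> {..<3} - {x}) = 2" by (simp add: card_cartesian_product)
  moreover have "({fst x} \<times> {..<3} - {x}) \<inter> forward_nbhd m x = {}"
    using Suc_mod_neq[OF assms(1), of "fst x"] assms(2) by (auto simp: forward_nbhd_def grid_def)
  ultimately show ?thesis
    by (simp add: nbhd_def card_Un_disjoint forward_nbhd_def card_cartesian_product)
qed

lemma mixed_template_bij:
  assumes "2 \<le> m" "x \<in> grid m"
  shows "bij_betw (\<lambda>\<sigma>. \<sigma> x) (mixed_template m ` {..<5}) (nbhd m x)"
proof -
  define c where "c = mixed_class m (fst x)"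
  have "c < 4" "snd x < 3" using assms(2) by (auto simp: c_def mixed_class_def grid_def)
  have "(\<lambda>f. mixed_template m f x) ` {..<5} =
      offset_shift m x ` (\<lambda>f. mixed_offsets ! c ! snd x ! f) ` {..<5}"
    unfolding image_image mixed_template_def c_def ..
  also have "\<dots> = nbhd m x"
    unfolding mixed_offsets_image[OF \<open>c < 4\<close> \<open>snd x < 3\<close>] by (rule offset_shift_image[OF assms])
  finally have image: "(\<lambda>f. mixed_template m f x) ` {..<5} = nbhd m x" .
  then have "inj_on (\<lambda>f. mixed_template m f x) {..<5}"
    using card_nbhd[OF assms] by (simp add: inj_on_iff_eq_card)
  then show ?thesis using bij_betw_apply_image image by metis
qed

lemma mixed_template_single_cycle:
  assumes m: "m = 2 * g + 3" and f: "f < 5"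
  shows "single_cycle_on (grid m) (mixed_template m f)"
proof (rule single_cycle_onI[where z = "(0, 0)" and pos = "mixed_pos m f"])
  have "2 \<le> m" using m by simp
  show "mixed_template m f x \<in> grid m" if "x \<in> grid m" for x
    using mixed_template_bij[OF \<open>2 \<le> m\<close> that] nbhd_subset_grid[OF \<open>2 \<le> m\<close> that] f
    by (auto dest: bij_betwE)
  show "mixed_pos m f (mixed_template m f x) mod card (grid m) = (mixed_pos m f x + 1) mod card (grid m)"
    if "x \<in> grid m" for x
    unfolding card_grid mixed_pos_step[OF m that f] by simp
qed (use m in \<open>auto simp: grid_def\<close>)

theorem mainTheorem9:
  fixes m :: nat
  assumes "odd m" and "m > 0"
    and "has_dcycle_factorization m {0..<2*m} (complete_sym_digraph (2*m))"
  shows "has_dcycle_factorization (3*m) {0..<6*m} (complete_sym_digraph (6*m))"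
proof -
  have "2 \<le> 2 * m" using \<open>m > 0\<close> by simp
  then have "2 \<le> m" using dcycle_factorization_length_ge_2[OF assms(3)] by blast
  obtain g where m: "m = 2 * g + 3"
  proof
    have "m = 2 * (m div 2) + 1" using \<open>odd m\<close> by simp
    then show "m = 2 * (m div 2 - 1) + 3" using \<open>2 \<le> m\<close> by linarith
  qed
  have "has_dcycle_factorization (3 * m) {0..<3 * (2 * m)} (complete_sym_digraph (3 * (2 * m)))"
  proof (rule has_dcycle_factorization_blowup[OF \<open>2 \<le> 2 * m\<close> assms(3)])
    fix x assume "x \<in> grid m"
    show "bij_betw (\<lambda>\<sigma>. \<sigma> x) (mixed_template m ` {..<5}) (nbhd m x)"
      using mixed_template_bij[OF \<open>2 \<le> m\<close> \<open>x \<in> grid m\<close>] .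
    show "bij_betw (\<lambda>\<sigma>. \<sigma> x) (fwd_template m ` {..<3}) (forward_nbhd m x)"
      using fwd_template_bij[OF \<open>x \<in> grid m\<close>] .
  next
    fix \<sigma> assume "\<sigma> \<in> mixed_template m ` {..<5} \<union> fwd_template m ` {..<3}"
    then show "single_cycle_on (grid m) \<sigma>"
      using mixed_template_single_cycle[OF m] fwd_template_single_cycle[of m] m by auto
  qed
  then show ?thesis by simp
qed

end
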